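(* Assume $\bar p=1/2$. There exists a constant $C>0$ such that for every distribution $\eta$ on $\mathcal R$ and every $n\ge1$, $$\Big|\frac{\mathrm{Var}_\eta(F_{n+1})}{n}-\tilde\nu\Big|\le\frac Cn,\qquad\text{where }\tilde\nu=2+4\mu D_{1-p}K\tilde{\mathbf r}=4\mu D_{1-p}K(I-K+2\mathbf p\,\mu D_pK)^{-1}(\mathbf 1-\mathbf p),$$ and $\tilde{\mathbf r}=(I-K+2\mathbf p\,\mu D_pK)^{-1}(\mathbf 1-\mathbf p)-\mathbf 1$.
   Context: Let $\mathcal R=\{1,\dots,N\}$ and let $K$ be a stochastic matrix on $\mathcal R$ whose Markov chain has a unique closed irreducible subset; let $\mu$ (row vector) be its unique stationary distribution. Fix $p:\mathcal R\to(0,1)$, $\mathbf p=(p(1),\dots,p(N))^t$, $\mathbf 1$ the all-ones column vector, $I$ the identity, $D_p$ the diagonal matrix with entries $p(i)$, $D_{1-p}=I-D_p$, $\bar p=\mu\cdot\mathbf p$. Under $P_\eta$, $(R_j)_{j\ge1}$ is a Markov chain with transition matrix $K$ and $R_1\sim\eta$, and given $(R_j)$ the $\xi(j)$ are independent Bernoulli$(p(R_j))$. $F_m=\inf\{k\ge0:\sum_{j=1}^{k+m}\xi(j)=m\}$ is the number of failures before the $m$-th success. (Equivalently $\mathrm{Var}_\eta(F_{n+1})=\mathrm{Var}_\eta(V_1\mid V_0=n)$ for the backward branching-like process.) *)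

theory Defs
  imports "HOL-Analysis.Analysis"
begin

text \<open>State space R = {1..N} is rendered as an arbitrary finite type 'n.
  Matrices are real^'n^'n (K$i$j = K(i,j)), row vectors / column vectors are real^'n.\<close>

definition stochastic_matrix :: "real^'n^'n \<Rightarrow> bool" where
  "stochastic_matrix K \<longleftrightarrow> (\<forall>i j. K$i$j \<ge> 0) \<and> (\<forall>i. (\<Sum>j\<in>UNIV. K$i$j) = 1)"

definition is_distribution :: "('n::finite \<Rightarrow> real) \<Rightarrow> bool" where
  "is_distribution \<eta> \<longleftrightarrow> (\<forall>i. \<eta> i \<ge> 0) \<and> (\<Sum>i\<in>UNIV. \<eta> i) = 1"

definition step_rel :: "real^'n^'n \<Rightarrow> ('n \<times> 'n) set" where
  "step_rel K = {(i,j). K$i$j > 0}"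

definition closed_set :: "real^'n^'n \<Rightarrow> 'n set \<Rightarrow> bool" where
  "closed_set K C \<longleftrightarrow> C \<noteq> {} \<and> (\<forall>i\<in>C. \<forall>j. K$i$j > 0 \<longrightarrow> j \<in> C)"

definition irreducible_set :: "real^'n^'n \<Rightarrow> 'n set \<Rightarrow> bool" where
  "irreducible_set K C \<longleftrightarrow> (\<forall>i\<in>C. \<forall>j\<in>C. (i,j) \<in> (step_rel K)\<^sup>*)"

definition unique_closed_irreducible :: "real^'n^'n \<Rightarrow> bool" where
  "unique_closed_irreducible K \<longleftrightarrow> (\<exists>!C. closed_set K C \<and> irreducible_set K C)"

definition stationary :: "real^'n^'n \<Rightarrow> real^'n \<Rightarrow> bool" where
  "stationary K \<mu> \<longleftrightarrow> (\<forall>i. \<mu>$i \<ge> 0) \<and> (\<Sum>i\<in>UNIV. \<mu>$i) = 1 \<and> \<mu> v* K = \<mu>"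

definition bern :: "('n \<Rightarrow> real) \<Rightarrow> 'n \<Rightarrow> bool \<Rightarrow> real" where
  "bern p r x = (if x then p r else 1 - p r)"

text \<open>Probability weight of a finite trajectory ((R_1,xi(1)),...,(R_L,xi(L))) excluding the
  initial law: product of Bernoulli weights and transition probabilities.\<close>
fun path_w :: "real^'n^'n \<Rightarrow> ('n \<Rightarrow> real) \<Rightarrow> ('n \<times> bool) list \<Rightarrow> real" where
  "path_w K p [] = 1"
| "path_w K p [(r,x)] = bern p r x"
| "path_w K p ((r,x) # (s,y) # rest) = bern p r x * K$r$s * path_w K p ((s,y) # rest)"

definition traj_prob :: "('n \<Rightarrow> real) \<Rightarrow> real^'n^'n \<Rightarrow> ('n \<Rightarrow> real) \<Rightarrow> ('n \<times> bool) list \<Rightarrow> real" where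
  "traj_prob \<eta> K p xs = (case xs of [] \<Rightarrow> 1 | (r,x) # _ \<Rightarrow> \<eta> r * path_w K p xs)"

text \<open>P_eta(F_m = k) for m \<ge> 1: the first k+m trials contain exactly m successes and
  trial k+m is a success.\<close>
definition F_prob :: "('n::finite \<Rightarrow> real) \<Rightarrow> real^'n^'n \<Rightarrow> ('n \<Rightarrow> real) \<Rightarrow> nat \<Rightarrow> nat \<Rightarrow> real" where
  "F_prob \<eta> K p m k = (\<Sum>xs\<in>{xs :: ('n \<times> bool) list. length xs = k + m
        \<and> length (filter snd xs) = m \<and> snd (last xs)}. traj_prob \<eta> K p xs)"

definition F_mean :: "('n::finite \<Rightarrow> real) \<Rightarrow> real^'n^'n \<Rightarrow> ('n \<Rightarrow> real) \<Rightarrow> nat \<Rightarrow> real" where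
  "F_mean \<eta> K p m = (\<Sum>k. real k * F_prob \<eta> K p m k)"

definition F_var :: "('n::finite \<Rightarrow> real) \<Rightarrow> real^'n^'n \<Rightarrow> ('n \<Rightarrow> real) \<Rightarrow> nat \<Rightarrow> real" where
  "F_var \<eta> K p m = (\<Sum>k. (real k - F_mean \<eta> K p m)^2 * F_prob \<eta> K p m k)"

definition diag_mat :: "('n \<Rightarrow> real) \<Rightarrow> real^'n^'n" where
  "diag_mat f = (\<chi> i j. if i = j then f i else 0)"

definition outer :: "real^'n \<Rightarrow> real^'n \<Rightarrow> real^'n^'n" where
  "outer u v = (\<chi> i j. u$i * v$j)"

definition nu_tilde :: "real^'n^'n \<Rightarrow> ('n \<Rightarrow> real) \<Rightarrow> real^'n \<Rightarrow> real" where
  "nu_tilde K p \<mu> =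
     (let pv = (\<chi> i. p i);
          A = mat 1 - K + 2 *\<^sub>R (outer pv \<mu> ** diag_mat p ** K)
      in 4 * ((\<mu> v* (diag_mat (\<lambda>i. 1 - p i) ** K ** matrix_inv A)) \<bullet> (vec 1 - pv)))"

end

(* The failures before the (n+1)-st success split into n+1 waiting periods.  Writing
   K = D_{1-p} K + D_p K, the state at the next success is drawn from
   Q = (I - D_{1-p} K)^{-1} D_p K, a stochastic matrix with stationary law pi = 2 mu D_p K.
   Every state leads into the unique closed class, so some column of Q is positive and Q
   contracts geometrically towards pi (Doeblin).  The first two moments of F_m obey linear
   recursions driven by Q.  Since mu p = 1/2, the Poisson equation (I - K) x = 1 - 2p is
   solvable; then E F_m = m + x - Q^m x, and E (F_m - m)^2 = sum_{i<m} Q^i h_{m-i} where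
   h_j -> h geometrically and pi h = nu~.  Geometric ergodicity makes both estimates uniform
   in the initial law, which gives Var F_{n+1} = n nu~ + O(1). *)

theory Submission
  imports Defs
begin

lemma finite_ex_min: fixes f :: "'a::finite \<Rightarrow> 'b::linorder" obtains x where "\<And>y. f x \<le> f y"
proof -
  have "Min (range f) \<in> range f" by (rule Min_in) auto
  then obtain x where x: "f x = Min (range f)" by (metis rangeE)
  have "f x \<le> f y" for y unfolding x by (rule Min_le) auto
  then show thesis by (rule that)
qed

lemma finite_ex_max: fixes f :: "'a::finite \<Rightarrow> 'b::linorder" obtains x where "\<And>y. f y \<le> f x"
proof -
  have "Max (range f) \<in> range f" by (rule Max_in) auto
  then obtain x where x: "f x = Max (range f)" by (metis rangeE)
  have "f y \<le> f x" for y unfolding x by (rule Max_ge) auto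
  then show thesis by (rule that)
qed

lemma matrix_inv_inverse:
  fixes A :: "real^'n^'n" assumes "invertible A"
  shows "A ** matrix_inv A = mat 1" "matrix_inv A ** A = mat 1"
proof -
  have "\<exists>A'. A ** A' = mat 1 \<and> A' ** A = mat 1" using assms unfolding invertible_def .
  then have "A ** matrix_inv A = mat 1 \<and> matrix_inv A ** A = mat 1"
    unfolding matrix_inv_def by (rule someI_ex)
  then show "A ** matrix_inv A = mat 1" "matrix_inv A ** A = mat 1" by auto
qed

lemma invertible_if_ker_trivial:
  fixes A :: "real^'n^'n" assumes "\<And>x. A *v x = 0 \<Longrightarrow> x = 0" shows "invertible A"
  using assms unfolding invertible_left_inverse matrix_left_invertible_ker by blast

lemma matrix_vector_mult_nth: "(M *v v)$r = (\<Sum>s\<in>UNIV. M$r$s * v$s)"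
  by (simp add: matrix_vector_mult_def)

lemma diag_mat_mult_nth: "(diag_mat f ** (M::real^'n^'n))$r$s = f r * M$r$s"
proof -
  have "(diag_mat f ** M)$r$s = (\<Sum>t\<in>UNIV. (if r = t then f r else 0) * M$t$s)"
    by (simp add: diag_mat_def matrix_matrix_mult_def)
  also have "\<dots> = (\<Sum>t\<in>UNIV. if r = t then f r * M$t$s else 0)" by (rule sum.cong) auto
  finally show ?thesis by simp
qed

lemma outer_mult_mult: "(outer u w ** M) *v v = (w \<bullet> (M *v v)) *\<^sub>R u" for M :: "real^'n^'n"
proof -
  have "(outer u w ** M) *v v = outer u w *v (M *v v)" by (simp only: matrix_vector_mul_assoc)
  also have "\<dots> = (w \<bullet> (M *v v)) *\<^sub>R u"
    by (simp add: vec_eq_iff outer_def matrix_vector_mult_nth inner_vec_def sum_distrib_left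
        mult.commute mult.left_commute)
  finally show ?thesis .
qed

lemma suminf_matrix_vector_mult:
  fixes M :: "real^'n^'m" and f :: "nat \<Rightarrow> real^'n"
  assumes "\<And>s. summable (\<lambda>k. f k $ s)"
  shows "summable (\<lambda>k. (M *v f k)$r)" "(M *v (\<chi> s. \<Sum>k. f k $ s))$r = (\<Sum>k. (M *v f k)$r)"
proof -
  have sm: "summable (\<lambda>k. M$r$s * f k $ s)" for s by (intro summable_mult assms)
  then show "summable (\<lambda>k. (M *v f k)$r)" unfolding matrix_vector_mult_nth by (rule summable_sum)
  have "(M *v (\<chi> s. \<Sum>k. f k $ s))$r = (\<Sum>s\<in>UNIV. \<Sum>k. M$r$s * f k $ s)"
    by (simp add: matrix_vector_mult_nth suminf_mult assms)
  also have "\<dots> = (\<Sum>k. (M *v f k)$r)"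
    unfolding matrix_vector_mult_nth by (rule suminf_sum[OF sm, symmetric])
  finally show "(M *v (\<chi> s. \<Sum>k. f k $ s))$r = (\<Sum>k. (M *v f k)$r)" .
qed

lemma abs_matrix_vector_mult_le:
  fixes M :: "real^'n^'m"
  assumes "\<And>s. \<bar>v$s\<bar> \<le> B" shows "\<bar>(M *v v)$r\<bar> \<le> (\<Sum>i\<in>UNIV. \<Sum>j\<in>UNIV. \<bar>M$i$j\<bar>) * B"
proof -
  have "0 \<le> B" using assms by (meson abs_ge_zero order_trans)
  have "\<bar>(M *v v)$r\<bar> \<le> (\<Sum>s\<in>UNIV. \<bar>M$r$s\<bar> * B)"
    unfolding matrix_vector_mult_nth using assms
    by (intro order_trans[OF sum_abs] sum_mono) (simp add: abs_mult mult_left_mono)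
  also have "\<dots> \<le> (\<Sum>i\<in>UNIV. \<Sum>j\<in>UNIV. \<bar>M$i$j\<bar>) * B"
    unfolding sum_distrib_right[symmetric] using \<open>0 \<le> B\<close>
    by (intro mult_right_mono member_le_sum[of r UNIV "\<lambda>i. \<Sum>j\<in>UNIV. \<bar>M$i$j\<bar>"]) (auto intro: sum_nonneg)
  finally show ?thesis .
qed

lemma abs_diff_component_le_norm: "\<bar>f$r - f$r'\<bar> \<le> 2 * norm (f :: real^'n)"
  using abs_triangle_ineq4[of "f$r" "f$r'"] component_le_norm_cart[of f r] component_le_norm_cart[of f r']
  by linarith

lemma diffs_power_one_ge: "real (Suc n) ^ d \<le> ((diffs ^^ d) (\<lambda>_. 1::real)) n"
proof (induction d arbitrary: n)
  case 0
  then show ?case by simp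
next
  case (Suc d)
  have "real (Suc n) ^ Suc d \<le> real (Suc n) * real (Suc (Suc n)) ^ d"
    by (simp add: mult_left_mono power_mono)
  also have "\<dots> \<le> real (Suc n) * ((diffs ^^ d) (\<lambda>_. 1)) (Suc n)"
    by (intro mult_left_mono Suc.IH) auto
  also have "\<dots> = ((diffs ^^ Suc d) (\<lambda>_. 1)) n" by (simp add: diffs_def)
  finally show ?case .
qed

lemma summable_power_times_geometric:
  assumes "0 \<le> \<rho>" "\<rho> < (1::real)" shows "summable (\<lambda>n. real (Suc n) ^ d * \<rho> ^ n)"
proof (rule summable_comparison_test')
  have "summable (\<lambda>n. ((diffs ^^ d) (\<lambda>_. 1::real)) n * x ^ n)" if "\<bar>x\<bar> < 1" for x :: real
    using that
  proof (induction d arbitrary: x)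
    case 0
    then show ?case by (simp add: summable_geometric)
  next
    case (Suc d)
    then show ?case using termdiff_converges[of x 1 "(diffs ^^ d) (\<lambda>_. 1)"] by simp
  qed
  then show "summable (\<lambda>n. ((diffs ^^ d) (\<lambda>_. 1::real)) n * \<rho> ^ n)" using assms by simp
  show "norm (real (Suc n) ^ d * \<rho> ^ n) \<le> ((diffs ^^ d) (\<lambda>_. 1)) n * \<rho> ^ n" for n
    using assms diffs_power_one_ge[of n d] by (simp add: mult_right_mono)
qed

lemma power_Suc_add_power_le: "0 \<le> (x::real) \<Longrightarrow> x ^ Suc m + (x + 1) ^ m \<le> (x + 1) ^ Suc m"
  using mult_left_mono[OF power_mono[of x "x + 1" m], of x] by (simp add: algebra_simps)

lemma sum_power_le_inverse: "0 \<le> x \<Longrightarrow> x < (1::real) \<Longrightarrow> (\<Sum>i<m. x^i) \<le> 1 / (1 - x)"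
  by (simp add: sum_gp_strict divide_right_mono)

section \<open>Stochastic matrices and Doeblin's contraction\<close>

lemma stochastic_matrix_nonneg: "stochastic_matrix M \<Longrightarrow> 0 \<le> M$i$j"
  unfolding stochastic_matrix_def by auto

lemma stochastic_matrix_row_sum: "stochastic_matrix M \<Longrightarrow> (\<Sum>j\<in>UNIV. M$i$j) = 1"
  unfolding stochastic_matrix_def by auto

lemma stochastic_matrix_le_one: "stochastic_matrix M \<Longrightarrow> M$i$j \<le> 1"
  using member_le_sum[of j UNIV "\<lambda>j. M$i$j"]
  by (simp add: stochastic_matrix_nonneg stochastic_matrix_row_sum)

lemma stochastic_matrix_mult_one: "stochastic_matrix M \<Longrightarrow> M *v 1 = 1"
  by (simp add: vec_eq_iff matrix_vector_mult_nth stochastic_matrix_row_sum)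

lemma stochastic_matrix_mult_le:
  assumes "stochastic_matrix M" "\<And>s. v$s \<le> c" shows "(M *v v)$r \<le> c"
proof -
  have "(M *v v)$r \<le> (\<Sum>s\<in>UNIV. M$r$s * c)" unfolding matrix_vector_mult_nth
    using assms by (intro sum_mono mult_left_mono) (auto simp: stochastic_matrix_nonneg)
  also have "\<dots> = c" using assms by (simp add: sum_distrib_right[symmetric] stochastic_matrix_row_sum)
  finally show ?thesis .
qed

lemma stochastic_matrix_mult_ge:
  assumes "stochastic_matrix M" "\<And>s. c \<le> v$s" shows "c \<le> (M *v v)$r"
  using stochastic_matrix_mult_le[OF assms(1), of "-v" "-c" r] assms(2)
  by (simp add: matrix_vector_mult_nth sum_negf)

lemma stochastic_matrix_mult_abs_le:
  assumes "stochastic_matrix M" "\<And>s. \<bar>v$s\<bar> \<le> c" shows "\<bar>(M *v v)$r\<bar> \<le> c"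
proof -
  have "v$s \<le> c" "-c \<le> v$s" for s using assms(2)[of s] by auto
  then have "(M *v v)$r \<le> c" "-c \<le> (M *v v)$r"
    using assms(1) by (auto intro!: stochastic_matrix_mult_le stochastic_matrix_mult_ge)
  then show ?thesis by linarith
qed

lemma distribution_inner_le:
  assumes "is_distribution (($) w)" "\<And>s. g$s \<le> c" shows "w \<bullet> g \<le> c"
proof -
  have "w \<bullet> g = (\<Sum>s\<in>UNIV. w$s * g$s)" by (simp add: inner_vec_def)
  also have "\<dots> \<le> (\<Sum>s\<in>UNIV. w$s * c)"
    using assms unfolding is_distribution_def by (intro sum_mono mult_left_mono) auto
  also have "\<dots> = c" using assms by (simp add: sum_distrib_right[symmetric] is_distribution_def)
  finally show ?thesis .
qed

lemma distribution_inner_ge: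
  assumes "is_distribution (($) w)" "\<And>s. c \<le> g$s" shows "c \<le> w \<bullet> g"
  using distribution_inner_le[OF assms(1), of "-g" "-c"] assms(2) by simp

lemma distribution_inner_abs_le:
  assumes "is_distribution (($) w)" "\<And>s. \<bar>g$s\<bar> \<le> c" shows "\<bar>w \<bullet> g\<bar> \<le> c"
proof -
  have "g$s \<le> c" "-c \<le> g$s" for s using assms(2)[of s] by auto
  then have "w \<bullet> g \<le> c" "-c \<le> w \<bullet> g"
    using assms(1) by (auto intro!: distribution_inner_le distribution_inner_ge)
  then show ?thesis by linarith
qed

lemma distribution_inner_one: "is_distribution (($) w) \<Longrightarrow> w \<bullet> 1 = 1"
  by (simp add: is_distribution_def inner_vec_def)

lemma distribution_axis: "is_distribution (($) (axis r (1::real)))"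
  unfolding is_distribution_def axis_def by simp

text \<open>Removing the mass \<open>\<delta>\<close> that every row puts on column \<open>s0\<close> leaves nonnegative rows of total
  mass \<open>1 - \<delta>\<close>, and the removed part is the same for all rows.\<close>
lemma doeblin_step:
  fixes Q :: "real^'n^'n"
  assumes "stochastic_matrix Q" "\<And>r. \<delta> \<le> Q$r$s0" "\<And>s. L \<le> f$s" "\<And>s. f$s \<le> U"
  shows "(Q *v f)$r - (Q *v f)$r' \<le> (1 - \<delta>) * (U - L)"
proof -
  define c where "c t s = Q$t$s - (if s = s0 then \<delta> else 0)" for t s
  have c_nonneg: "0 \<le> c t s" for t s
    using assms(2)[of t] stochastic_matrix_nonneg[OF assms(1)] unfolding c_def by auto
  have c_sum: "(\<Sum>s\<in>UNIV. c t s) = 1 - \<delta>" for t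
    unfolding c_def by (simp add: sum_subtractf stochastic_matrix_row_sum[OF assms(1)])
  have delta: "(\<Sum>s\<in>UNIV. (if s = s0 then \<delta> else 0) * f$s) = \<delta> * f$s0"
    by (subst sum.cong[of _ _ _ "\<lambda>s. if s = s0 then \<delta> * f$s else 0"]) auto
  have split: "(Q *v f)$t = \<delta> * f$s0 + (\<Sum>s\<in>UNIV. c t s * f$s)" for t
    unfolding c_def by (simp add: matrix_vector_mult_nth left_diff_distrib sum_subtractf delta)
  have "(\<Sum>s\<in>UNIV. c r s * f$s) \<le> (\<Sum>s\<in>UNIV. c r s * U)"
    using assms c_nonneg by (intro sum_mono mult_left_mono) auto
  also have "\<dots> = (1 - \<delta>) * U" by (simp add: sum_distrib_right[symmetric] c_sum)
  finally have upper: "(Q *v f)$r \<le> \<delta> * f$s0 + (1 - \<delta>) * U" by (simp add: split)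
  have "(1 - \<delta>) * L = (\<Sum>s\<in>UNIV. c r' s * L)" by (simp add: sum_distrib_right[symmetric] c_sum)
  also have "\<dots> \<le> (\<Sum>s\<in>UNIV. c r' s * f$s)"
    using assms c_nonneg by (intro sum_mono mult_left_mono) auto
  finally have lower: "\<delta> * f$s0 + (1 - \<delta>) * L \<le> (Q *v f)$r'" by (simp add: split)
  from upper lower show ?thesis by (simp add: algebra_simps)
qed

lemma doeblin_oscillation:
  fixes Q :: "real^'n^'n"
  assumes Q: "stochastic_matrix Q" "\<And>r. \<delta> \<le> Q$r$s0" and f: "\<And>r r'. \<bar>f$r - f$r'\<bar> \<le> D"
  shows "\<bar>(((*v) Q ^^ i) f)$r - (((*v) Q ^^ i) f)$r'\<bar> \<le> (1 - \<delta>)^i * D"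
proof (induction i arbitrary: r r')
  case 0
  then show ?case using f by simp
next
  case (Suc i)
  define g where "g = ((*v) Q ^^ i) f"
  obtain hi where hi: "\<And>s. g$s \<le> g$hi" using finite_ex_max by blast
  obtain lo where lo: "\<And>s. g$lo \<le> g$s" using finite_ex_min by blast
  have "0 \<le> 1 - \<delta>" using Q(2)[of s0] stochastic_matrix_le_one[OF Q(1)] by (smt (verit))
  have bound: "(Q *v g)$t - (Q *v g)$t' \<le> (1 - \<delta>)^Suc i * D" for t t'
  proof -
    have "(Q *v g)$t - (Q *v g)$t' \<le> (1 - \<delta>) * (g$hi - g$lo)"
      using doeblin_step[OF Q, of "g$lo" g "g$hi"] hi lo by blast
    also have "\<dots> \<le> (1 - \<delta>) * ((1 - \<delta>)^i * D)"
      using Suc.IH[of hi lo] \<open>0 \<le> 1 - \<delta>\<close> unfolding g_def by (intro mult_left_mono) auto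
    finally show ?thesis by (simp add: mult.assoc)
  qed
  show ?case using bound[of r r'] bound[of r' r] unfolding g_def by (simp add: abs_le_iff)
qed

lemma doeblin_distributions:
  fixes Q :: "real^'n^'n"
  assumes "stochastic_matrix Q" "\<And>r. \<delta> \<le> Q$r$s0" "\<And>r r'. \<bar>f$r - f$r'\<bar> \<le> D"
    and "is_distribution (($) w)" "is_distribution (($) w')"
  shows "\<bar>w \<bullet> ((*v) Q ^^ i) f - w' \<bullet> ((*v) Q ^^ i) f\<bar> \<le> (1 - \<delta>)^i * D"
proof -
  define g where "g = ((*v) Q ^^ i) f"
  obtain hi where hi: "\<And>s. g$s \<le> g$hi" using finite_ex_max by blast
  obtain lo where lo: "\<And>s. g$lo \<le> g$s" using finite_ex_min by blast
  have "w \<bullet> g \<le> g$hi" "w' \<bullet> g \<le> g$hi" "g$lo \<le> w \<bullet> g" "g$lo \<le> w' \<bullet> g"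
    using assms(4,5) hi lo by (auto intro: distribution_inner_le distribution_inner_ge)
  moreover have "g$hi - g$lo \<le> (1 - \<delta>)^i * D"
    using doeblin_oscillation[OF assms(1-3), of i hi lo] unfolding g_def by simp
  ultimately show ?thesis unfolding g_def by (simp add: abs_le_iff)
qed

section \<open>Closed classes and harmonic functions\<close>

lemma reachable_closed_irreducible:
  "\<exists>t. (r, t) \<in> (step_rel K)\<^sup>* \<and> closed_set K {u. (t, u) \<in> (step_rel K)\<^sup>*}
      \<and> irreducible_set K {u. (t, u) \<in> (step_rel K)\<^sup>*}"
proof -
  define reach where "reach t = {u. (t, u) \<in> (step_rel K)\<^sup>*}" for t
  obtain t where t: "(r, t) \<in> (step_rel K)\<^sup>*"
    and t_min: "\<And>t'. (r, t') \<in> (step_rel K)\<^sup>* \<Longrightarrow> card (reach t) \<le> card (reach t')"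
    using ex_has_least_nat[of "\<lambda>t. (r, t) \<in> (step_rel K)\<^sup>*" r "\<lambda>t. card (reach t)"] by auto
  have "closed_set K (reach t)"
    unfolding closed_set_def reach_def step_rel_def by (auto intro: rtrancl_into_rtrancl)
  moreover have "irreducible_set K (reach t)"
    unfolding irreducible_set_def
  proof (intro ballI)
    fix u v assume u: "u \<in> reach t" and v: "v \<in> reach t"
    have sub: "reach u \<subseteq> reach t" using u unfolding reach_def by (auto intro: rtrancl_trans)
    have "(r, u) \<in> (step_rel K)\<^sup>*" using t u unfolding reach_def by (auto intro: rtrancl_trans)
    then have "card (reach t) \<le> card (reach u)" by (rule t_min)
    moreover have "card (reach u) \<le> card (reach t)" using sub by (simp add: card_mono)
    ultimately have "reach u = reach t" using sub by (simp add: card_subset_eq)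
    then show "(u, v) \<in> (step_rel K)\<^sup>*" using v unfolding reach_def by auto
  qed
  ultimately show ?thesis using t unfolding reach_def by blast
qed

lemma unique_closed_irreducible_common_target:
  assumes K: "stochastic_matrix K" and "unique_closed_irreducible K"
  obtains s0 where "\<And>r. (r, s0) \<in> (step_rel K)\<^sup>+"
proof -
  obtain C where C: "closed_set K C" "irreducible_set K C"
    and C_unique: "\<And>C'. closed_set K C' \<Longrightarrow> irreducible_set K C' \<Longrightarrow> C' = C"
    using assms(2) unfolding unique_closed_irreducible_def by blast
  obtain s0 where s0: "s0 \<in> C" using C(1) unfolding closed_set_def by auto
  obtain j where j: "0 < K$s0$j"
    using stochastic_matrix_row_sum[OF K, of s0] stochastic_matrix_nonneg[OF K, of s0]
    by (metis antisym_conv2 sum.neutral zero_neq_one)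
  have "(s0, j) \<in> step_rel K" using j by (simp add: step_rel_def)
  moreover have "(j, s0) \<in> (step_rel K)\<^sup>*"
    using C s0 j unfolding closed_set_def irreducible_set_def by auto
  ultimately have s0_loop: "(s0, s0) \<in> (step_rel K)\<^sup>+" by (rule rtrancl_into_trancl2)
  have "(r, s0) \<in> (step_rel K)\<^sup>+" for r
  proof -
    obtain t where rt: "(r, t) \<in> (step_rel K)\<^sup>*"
      and cl: "closed_set K {u. (t, u) \<in> (step_rel K)\<^sup>*}"
      and irr: "irreducible_set K {u. (t, u) \<in> (step_rel K)\<^sup>*}"
      using reachable_closed_irreducible by blast
    from cl irr have "{u. (t, u) \<in> (step_rel K)\<^sup>*} = C" by (rule C_unique)
    then have "(t, s0) \<in> (step_rel K)\<^sup>*" using s0 by auto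
    with rt have "(r, s0) \<in> (step_rel K)\<^sup>*" by (rule rtrancl_trans)
    then show ?thesis using s0_loop by (rule rtrancl_trancl_trancl)
  qed
  then show thesis by (rule that)
qed

lemma stochastic_harmonic_max_propagates:
  assumes K: "stochastic_matrix K" and harm: "K *v x = x" and hi: "\<And>s. x$s \<le> x$hi"
    and "(hi, t) \<in> (step_rel K)\<^sup>*"
  shows "x$t = x$hi"
  using assms(4)
proof (induction rule: rtrancl_induct)
  case base
  then show ?case by simp
next
  case (step y z)
  have "(\<Sum>u\<in>UNIV. K$y$u * (x$hi - x$u)) = x$hi * (\<Sum>u\<in>UNIV. K$y$u) - (K *v x)$y"
    by (simp add: right_diff_distrib sum_subtractf sum_distrib_left matrix_vector_mult_nth mult.commute)
  also have "\<dots> = 0" using harm step.IH by (simp add: stochastic_matrix_row_sum[OF K])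
  finally have "\<forall>u\<in>UNIV. K$y$u * (x$hi - x$u) = 0"
    using hi stochastic_matrix_nonneg[OF K] by (subst sum_nonneg_eq_0_iff[symmetric]) auto
  then have "K$y$z * (x$hi - x$z) = 0" by simp
  moreover have "0 < K$y$z" using step.hyps(2) by (simp add: step_rel_def)
  ultimately show ?case by simp
qed

lemma stochastic_harmonic_const:
  assumes K: "stochastic_matrix K" and reach: "\<And>r. (r, s0) \<in> (step_rel K)\<^sup>*" and harm: "K *v x = x"
  shows "x$r = x$s0"
proof -
  obtain hi where hi: "\<And>s. x$s \<le> x$hi" using finite_ex_max by blast
  obtain lo where lo: "\<And>s. (-x)$s \<le> (-x)$lo" using finite_ex_max by blast
  have harm': "K *v (-x) = -x" using harm by (simp add: linear_neg[OF matrix_vector_mul_linear])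
  have "x$s0 = x$hi" "(-x)$s0 = (-x)$lo"
    using stochastic_harmonic_max_propagates[OF K harm hi reach]
      stochastic_harmonic_max_propagates[OF K harm' lo reach] by auto
  then show ?thesis using hi[of r] lo[of r] by simp
qed

definition success_paths :: "nat \<Rightarrow> nat \<Rightarrow> ('a \<times> bool) list set" where
  "success_paths m k = {xs. length xs = k + m \<and> length (filter snd xs) = m \<and> snd (last xs)}"

lemma finite_success_paths: "finite (success_paths m k :: ('a::finite \<times> bool) list set)"
  by (rule finite_subset[OF _ finite_lists_length_eq[of UNIV "k + m"]]) (auto simp: success_paths_def)

lemma Nil_notin_success_paths: "[] \<notin> success_paths (Suc m) k"
  by (simp add: success_paths_def)

lemma Cons_fail_success_paths:
  "Cons (r, False) -` success_paths (Suc m) k = (if k = 0 then {} else success_paths (Suc m) (k - 1))"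
proof -
  have "(r, False) # ys \<in> success_paths (Suc m) k \<longleftrightarrow> 0 < k \<and> ys \<in> success_paths (Suc m) (k - 1)"
    for ys :: "('a \<times> bool) list"
  proof
    assume ys: "(r, False) # ys \<in> success_paths (Suc m) k"
    then have "length (filter snd ys) = Suc m" "length ys = k + m" by (auto simp: success_paths_def)
    moreover from this have "ys \<noteq> []" by auto
    moreover have "Suc m \<le> length ys" using calculation(1) length_filter_le[of snd ys] by simp
    ultimately show "0 < k \<and> ys \<in> success_paths (Suc m) (k - 1)"
      using ys by (auto simp: success_paths_def)
  qed (auto simp: success_paths_def)
  then show ?thesis by auto
qed

lemma Cons_succ_success_paths:
  "Cons (r, True) -` success_paths (Suc m) k
     = (if m = 0 then (if k = 0 then {[]} else {}) else success_paths m k)"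
proof -
  have "(r, True) # ys \<in> success_paths (Suc m) k \<longleftrightarrow>
      (if m = 0 then ys = [] \<and> k = 0 else ys \<in> success_paths m k)" for ys :: "('a \<times> bool) list"
  proof (cases "ys = []")
    case False
    then have "snd (last ys) \<Longrightarrow> filter snd ys \<noteq> []"
      by (metis empty_filter_conv last_in_set)
    then show ?thesis using False by (auto simp: success_paths_def)
  qed (auto simp: success_paths_def)
  then show ?thesis by auto
qed

lemma path_w_Cons:
  "ys \<noteq> [] \<Longrightarrow> path_w K p ((r, b) # ys) = bern p r b * (K$r$(fst (hd ys)) * path_w K p ys)"
  by (cases ys) auto

section \<open>The chain observed at success times\<close>

locale bernoulli_chain =
  fixes K :: "real^'n::finite^'n" and p :: "'n \<Rightarrow> real"
  assumes stochastic: "stochastic_matrix K" and p_bounds: "\<forall>i. 0 < p i \<and> p i < 1"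
begin

lemma K_nonneg: "0 \<le> K$i$j" using stochastic by (rule stochastic_matrix_nonneg)
lemma p_pos: "0 < p i" using p_bounds by auto
lemma p_lt_one: "p i < 1" using p_bounds by auto

definition pvec where "pvec = (\<chi> i. p i)"
definition Kfail where "Kfail = diag_mat (\<lambda>i. 1 - p i) ** K"
definition Ksucc where "Ksucc = diag_mat p ** K"

lemma Ksucc_nth: "Ksucc$r$s = p r * K$r$s"
  by (simp add: Ksucc_def diag_mat_mult_nth)

lemma Kfail_mult_nth: "(Kfail *v v)$r = (1 - p r) * (K *v v)$r"
  by (simp add: Kfail_def matrix_vector_mult_nth diag_mat_mult_nth sum_distrib_left mult.assoc)

lemma Ksucc_mult_nth: "(Ksucc *v v)$r = p r * (K *v v)$r"
  by (simp add: Ksucc_def matrix_vector_mult_nth diag_mat_mult_nth sum_distrib_left mult.assoc)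

lemma Kfail_plus_Ksucc: "Kfail + Ksucc = K"
  by (simp add: vec_eq_iff Kfail_def Ksucc_def diag_mat_mult_nth algebra_simps)

lemma K_mult_split: "K *v v = Kfail *v v + Ksucc *v v"
  using matrix_vector_mult_add_rdistrib[of Kfail Ksucc v] unfolding Kfail_plus_Ksucc .

lemma Kfail_one: "Kfail *v 1 = 1 - pvec"
  by (simp add: vec_eq_iff Kfail_mult_nth stochastic_matrix_mult_one[OF stochastic] pvec_def)

lemma Ksucc_one: "Ksucc *v 1 = pvec"
  by (simp add: vec_eq_iff Ksucc_mult_nth stochastic_matrix_mult_one[OF stochastic] pvec_def)

definition G where "G = mat 1 - Kfail"

lemma G_mult: "G *v v = v - Kfail *v v"
  by (simp add: G_def matrix_vector_mult_diff_rdistrib)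

lemma G_one: "G *v 1 = pvec"
  by (simp add: G_mult Kfail_one)

lemma G_nonneg_imp_nonneg:
  assumes "\<And>r. 0 \<le> (G *v v)$r" shows "0 \<le> v$r"
proof -
  obtain lo where lo: "\<And>s. v$lo \<le> v$s" using finite_ex_min by blast
  have "v$lo \<le> (K *v v)$lo" by (rule stochastic_matrix_mult_ge[OF stochastic lo])
  then have "(1 - p lo) * v$lo \<le> (1 - p lo) * (K *v v)$lo"
    using p_lt_one[of lo] by (intro mult_left_mono) auto
  moreover have "0 \<le> v$lo - (1 - p lo) * (K *v v)$lo"
    using assms[of lo] by (simp add: G_mult Kfail_mult_nth)
  ultimately have "0 \<le> p lo * v$lo" by (simp add: algebra_simps)
  then have "0 \<le> v$lo" using p_pos[of lo] by (simp add: zero_le_mult_iff)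
  then show ?thesis using lo[of r] by linarith
qed

lemma G_invertible: "invertible G"
proof (rule invertible_if_ker_trivial)
  fix v assume v: "G *v v = 0"
  have "0 \<le> v$r" for r by (rule G_nonneg_imp_nonneg) (simp add: v)
  moreover have "0 \<le> (-v)$r" for r
    by (rule G_nonneg_imp_nonneg) (simp add: v linear_neg[OF matrix_vector_mul_linear])
  ultimately show "v = 0" by (simp add: vec_eq_iff eq_iff)
qed

definition Ginv where "Ginv = matrix_inv G"

lemma G_Ginv_mat: "G ** Ginv = mat 1" and Ginv_G_mat: "Ginv ** G = mat 1"
  unfolding Ginv_def using matrix_inv_inverse[OF G_invertible] by auto

lemma G_Ginv: "G *v (Ginv *v v) = v"
  by (simp only: matrix_vector_mul_assoc G_Ginv_mat matrix_vector_mul_lid)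

lemma Ginv_G: "Ginv *v (G *v v) = v"
  by (simp only: matrix_vector_mul_assoc Ginv_G_mat matrix_vector_mul_lid)

lemma G_cancel: "G *v u = G *v w \<Longrightarrow> u = w"
  by (metis Ginv_G)

text \<open>\<open>Q$r$s\<close> is the probability, starting from \<open>r\<close>, that the first success occurs in state \<open>s\<close>;
  so \<open>Q\<close> is the transition matrix of the chain observed at success times.\<close>
definition Q where "Q = Ginv ** Ksucc"

lemma G_Q_mult: "G *v (Q *v v) = Ksucc *v v"
  by (simp only: Q_def matrix_vector_mul_assoc[symmetric] G_Ginv)

lemma Q_nth_fixpoint: "Q$r$s = (1 - p r) * (K *v column s Q)$r + p r * K$r$s"
proof -
  have "(G *v (Q *v axis s 1))$r = (Ksucc *v axis s 1)$r" by (simp only: G_Q_mult)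
  then show ?thesis
    by (simp add: matrix_vector_mult_basis G_mult Kfail_mult_nth Ksucc_nth column_def
        algebra_simps)
qed

lemma Q_stochastic: "stochastic_matrix Q"
  unfolding stochastic_matrix_def
proof (intro conjI allI)
  fix r s
  have "0 \<le> (G *v (Q *v axis s 1))$t" for t
    unfolding G_Q_mult
    by (simp add: matrix_vector_mult_basis column_def Ksucc_nth K_nonneg p_pos less_imp_le)
  from G_nonneg_imp_nonneg[OF this, of r] show "0 \<le> Q$r$s"
    by (simp add: matrix_vector_mult_basis column_def)
  have "G *v (Q *v 1) = G *v 1" by (simp add: G_Q_mult Ksucc_one G_one)
  then have "Q *v 1 = 1" by (rule G_cancel)
  then show "(\<Sum>s\<in>UNIV. Q$r$s) = 1" by (simp add: vec_eq_iff matrix_vector_mult_nth)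
qed

lemma Q_pos_if_reachable:
  assumes "(r, s) \<in> (step_rel K)\<^sup>+" shows "0 < Q$r$s"
  using assms
proof (induction rule: converse_trancl_induct)
  case (base y)
  have "0 \<le> (1 - p y) * (K *v column s Q)$y"
    using p_lt_one[of y] stochastic_matrix_nonneg[OF Q_stochastic]
    by (auto intro!: mult_nonneg_nonneg stochastic_matrix_mult_ge[OF stochastic] simp: column_def)
  moreover have "0 < p y * K$y$s" using base p_pos[of y] by (simp add: step_rel_def)
  ultimately show ?case unfolding Q_nth_fixpoint[of y s] by linarith
next
  case (step y z)
  have "K$y$z * Q$z$s \<le> (\<Sum>t\<in>UNIV. K$y$t * Q$t$s)"
    using K_nonneg stochastic_matrix_nonneg[OF Q_stochastic] by (intro member_le_sum) auto
  also have "\<dots> = (K *v column s Q)$y" by (simp add: matrix_vector_mult_nth column_def)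
  finally have "K$y$z * Q$z$s \<le> (K *v column s Q)$y" .
  moreover have "0 < K$y$z * Q$z$s" using step by (simp add: step_rel_def)
  ultimately have "0 < (1 - p y) * (K *v column s Q)$y" using p_lt_one[of y] by simp
  moreover have "0 \<le> p y * K$y$s" using p_pos[of y] K_nonneg[of y s] by simp
  ultimately show ?case unfolding Q_nth_fixpoint[of y s] by linarith
qed

abbreviation Q_pow :: "nat \<Rightarrow> real^'n \<Rightarrow> real^'n" where "Q_pow i \<equiv> (*v) Q ^^ i"

lemma linear_Q_pow: "linear (Q_pow i)"
proof (induction i)
  case 0
  then show ?case by (simp add: linear_iff)
next
  case (Suc i)
  then show ?case using linear_compose[OF Suc.IH matrix_vector_mul_linear] by (simp add: o_def)
qed

lemma Q_pow_abs_le: "(\<And>s. \<bar>v$s\<bar> \<le> B) \<Longrightarrow> \<bar>Q_pow i v $ r\<bar> \<le> B"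
  by (induction i arbitrary: r) (simp_all add: stochastic_matrix_mult_abs_le[OF Q_stochastic])

definition path_sum :: "('n \<times> bool) list set \<Rightarrow> real^'n" where
  "path_sum S = (\<chi> r. \<Sum>xs\<in>{xs\<in>S. fst (hd xs) = r}. path_w K p xs)"

lemma path_sum_Cons:
  assumes "finite T" "[] \<notin> T"
  shows "(\<Sum>ys\<in>T. path_w K p ((r, b) # ys)) = bern p r b * (K *v path_sum T)$r"
proof -
  have "path_w K p ((r, b) # ys) = bern p r b * (K$r$(fst (hd ys)) * path_w K p ys)" if "ys \<in> T" for ys
    using that assms(2) by (intro path_w_Cons) auto
  then have "(\<Sum>ys\<in>T. path_w K p ((r, b) # ys)) = bern p r b * (\<Sum>ys\<in>T. K$r$(fst (hd ys)) * path_w K p ys)"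
    by (simp add: sum_distrib_left)
  also have "(\<Sum>ys\<in>T. K$r$(fst (hd ys)) * path_w K p ys)
      = (\<Sum>s\<in>UNIV. \<Sum>ys\<in>{ys\<in>T. fst (hd ys) = s}. K$r$(fst (hd ys)) * path_w K p ys)"
    by (rule sum.group[symmetric]) (use assms in auto)
  also have "\<dots> = (K *v path_sum T)$r"
    by (simp add: path_sum_def matrix_vector_mult_nth sum_distrib_left)
  finally show ?thesis .
qed

lemma path_sum_by_first_step:
  fixes S :: "('n \<times> bool) list set"
  assumes "finite S" "[] \<notin> S"
  shows "path_sum S $ r = (\<Sum>b\<in>UNIV. \<Sum>ys\<in>Cons (r, b) -` S. path_w K p ((r, b) # ys))"
proof -
  have "{xs\<in>S. fst (hd xs) = r} = (\<lambda>(b, ys). (r, b) # ys) ` (SIGMA b:UNIV. Cons (r, b) -` S)"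
  proof (intro set_eqI iffI)
    fix xs assume xs: "xs \<in> {xs\<in>S. fst (hd xs) = r}"
    then obtain b ys where "xs = (r, b) # ys" using assms(2) by (cases xs) auto
    then show "xs \<in> (\<lambda>(b, ys). (r, b) # ys) ` (SIGMA b:UNIV. Cons (r, b) -` S)" using xs by force
  qed auto
  moreover have "inj_on (\<lambda>(b, ys). (r, b) # ys) (SIGMA b:UNIV. Cons (r, b) -` S)"
    by (auto simp: inj_on_def)
  moreover have "finite (Cons (r, b) -` S)" for b
    using assms(1) by (rule finite_vimageI) simp
  ultimately show ?thesis
    by (simp add: path_sum_def sum.reindex sum.Sigma case_prod_unfold)
qed

text \<open>\<open>F_weight m k $ r\<close> is \<open>P\<^sub>r(F\<^sub>m = k)\<close>; the equations condition on the outcome of the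
  first trial.\<close>
fun F_weight :: "nat \<Rightarrow> nat \<Rightarrow> real^'n" where
  "F_weight 0 k = 0"
| "F_weight (Suc m) 0 = Ksucc *v F_weight m 0 + (if m = 0 then pvec else 0)"
| "F_weight (Suc m) (Suc k) = Kfail *v F_weight (Suc m) k + Ksucc *v F_weight m (Suc k)"

lemma path_sum_success_paths_nth:
  "path_sum (success_paths (Suc m) k) $ r =
     (if k = 0 then 0 else (Kfail *v path_sum (success_paths (Suc m) (k - 1)))$r)
   + (if m = 0 then (if k = 0 then p r else 0) else (Ksucc *v path_sum (success_paths m k))$r)"
proof -
  have fail: "(\<Sum>ys\<in>Cons (r, False) -` success_paths (Suc m) k. path_w K p ((r, False) # ys))
      = (if k = 0 then 0 else (Kfail *v path_sum (success_paths (Suc m) (k - 1)))$r)"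
    by (cases k) (simp_all add: Cons_fail_success_paths path_sum_Cons finite_success_paths
        Nil_notin_success_paths Kfail_mult_nth bern_def)
  have succ: "(\<Sum>ys\<in>Cons (r, True) -` success_paths (Suc m) k. path_w K p ((r, True) # ys))
      = (if m = 0 then (if k = 0 then p r else 0) else (Ksucc *v path_sum (success_paths m k))$r)"
  proof (cases m)
    case (Suc m')
    then show ?thesis
      by (simp add: Cons_succ_success_paths path_sum_Cons finite_success_paths
          Nil_notin_success_paths Ksucc_mult_nth bern_def)
  qed (cases "k = 0"; simp add: Cons_succ_success_paths bern_def)
  show ?thesis
    by (simp add: path_sum_by_first_step finite_success_paths Nil_notin_success_paths UNIV_bool
        fail succ add.commute)
qed

lemma F_weight_eq_path_sum: "F_weight (Suc m) k = path_sum (success_paths (Suc m) k)"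
proof (induction m arbitrary: k)
  case 0
  show ?case
  proof (induction k)
    case 0
    show ?case by (simp add: vec_eq_iff path_sum_success_paths_nth pvec_def)
  next
    case (Suc k)
    show ?case by (simp add: vec_eq_iff path_sum_success_paths_nth Suc.IH[symmetric])
  qed
next
  case (Suc m)
  note IH_m = Suc.IH
  show ?case
  proof (induction k)
    case 0
    show ?case by (simp add: vec_eq_iff path_sum_success_paths_nth IH_m[symmetric])
  next
    case (Suc k)
    show ?case
      by (simp add: vec_eq_iff path_sum_success_paths_nth Suc.IH[symmetric] IH_m[symmetric])
  qed
qed

lemma F_prob_eq_F_weight: "F_prob \<eta> K p (Suc m) k = (\<Sum>r\<in>UNIV. \<eta> r * F_weight (Suc m) k $ r)"
proof -
  have traj: "traj_prob \<eta> K p xs = \<eta> (fst (hd xs)) * path_w K p xs"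
    if "xs \<in> success_paths (Suc m) k" for xs
    using that Nil_notin_success_paths by (cases xs) (auto simp: traj_prob_def)
  have "F_prob \<eta> K p (Suc m) k = (\<Sum>xs\<in>success_paths (Suc m) k. \<eta> (fst (hd xs)) * path_w K p xs)"
    unfolding F_prob_def success_paths_def[symmetric] by (rule sum.cong) (simp_all add: traj)
  also have "\<dots> = (\<Sum>r\<in>UNIV. \<Sum>xs\<in>{xs\<in>success_paths (Suc m) k. fst (hd xs) = r}.
      \<eta> (fst (hd xs)) * path_w K p xs)"
    by (rule sum.group[symmetric]) (auto simp: finite_success_paths)
  also have "\<dots> = (\<Sum>r\<in>UNIV. \<eta> r * path_sum (success_paths (Suc m) k) $ r)"
    unfolding path_sum_def by (auto simp: sum_distrib_left intro!: sum.cong)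
  finally show ?thesis by (simp add: F_weight_eq_path_sum)
qed

section \<open>Moments of the number of failures\<close>

definition fail_max where "fail_max = Max (range (\<lambda>r. 1 - p r))"

lemma fail_max_ge: "1 - p r \<le> fail_max"
  unfolding fail_max_def by (rule Max_ge) auto

lemma fail_max_lt_one: "fail_max < 1"
proof -
  have "fail_max \<in> range (\<lambda>r. 1 - p r)" unfolding fail_max_def by (rule Max_in) auto
  then show ?thesis using p_pos by auto
qed

lemma fail_max_pos: "0 < fail_max"
  using fail_max_ge[of undefined] p_lt_one[of undefined] by simp

lemma Kfail_mult_bounds:
  assumes "\<And>s. 0 \<le> v$s" "\<And>s. v$s \<le> B"
  shows "0 \<le> (Kfail *v v)$r" "(Kfail *v v)$r \<le> fail_max * B"
proof -
  have Kv: "0 \<le> (K *v v)$r" "(K *v v)$r \<le> B"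
    using assms stochastic_matrix_mult_ge[OF stochastic] stochastic_matrix_mult_le[OF stochastic]
    by blast+
  show "0 \<le> (Kfail *v v)$r" unfolding Kfail_mult_nth using Kv p_lt_one[of r] by simp
  show "(Kfail *v v)$r \<le> fail_max * B" unfolding Kfail_mult_nth
    using Kv fail_max_ge[of r] fail_max_pos by (intro mult_mono) auto
qed

lemma Ksucc_mult_bounds:
  assumes "\<And>s. 0 \<le> v$s" "\<And>s. v$s \<le> B"
  shows "0 \<le> (Ksucc *v v)$r" "(Ksucc *v v)$r \<le> B"
proof -
  have Kv: "0 \<le> (K *v v)$r" "(K *v v)$r \<le> B"
    using assms stochastic_matrix_mult_ge[OF stochastic] stochastic_matrix_mult_le[OF stochastic]
    by blast+
  show "0 \<le> (Ksucc *v v)$r" unfolding Ksucc_mult_nth using Kv p_pos[of r] by simp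
  show "(Ksucc *v v)$r \<le> B" unfolding Ksucc_mult_nth
    using Kv p_lt_one[of r] p_pos[of r] by (metis less_imp_le mult_left_le_one_le order.trans)
qed

text \<open>Having \<open>k\<close> failures before the \<open>(m+1)\<close>-st success means choosing which \<open>m\<close> of the first
  \<open>k+m\<close> trials succeed, and each failure costs a factor at most \<open>fail_max\<close>.\<close>
lemma F_weight_bounds:
  "0 \<le> F_weight (Suc m) k $ r \<and> F_weight (Suc m) k $ r \<le> real (Suc k) ^ m * fail_max ^ k"
proof (induction m arbitrary: k r)
  case 0
  show ?case
  proof (induction k arbitrary: r)
    case 0
    show ?case using p_pos[of r] p_lt_one[of r] by (simp add: pvec_def)
  next
    case (Suc k)
    show ?case using Kfail_mult_bounds[of "F_weight (Suc 0) k" "fail_max ^ k" r] Suc.IH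
      by (simp add: mult.commute)
  qed
next
  case (Suc m)
  note IH_m = Suc.IH
  show ?case
  proof (induction k arbitrary: r)
    case 0
    show ?case using Ksucc_mult_bounds[of "F_weight (Suc m) 0" 1 r] IH_m[of 0] by simp
  next
    case (Suc k)
    have "(real (Suc k) ^ Suc m + real (Suc (Suc k)) ^ m) * fail_max ^ Suc k
        \<le> real (Suc (Suc k)) ^ Suc m * fail_max ^ Suc k"
      using power_Suc_add_power_le[of "real (Suc k)" m] fail_max_pos by (intro mult_right_mono) auto
    moreover have "(real (Suc k) ^ Suc m + real (Suc (Suc k)) ^ m) * fail_max ^ Suc k
        = fail_max * (real (Suc k) ^ Suc m * fail_max ^ k) + real (Suc (Suc k)) ^ m * fail_max ^ Suc k"
      by (simp add: algebra_simps)
    moreover have "\<And>s. 0 \<le> F_weight (Suc (Suc m)) k $ s"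
      "\<And>s. F_weight (Suc (Suc m)) k $ s \<le> real (Suc k) ^ Suc m * fail_max ^ k"
      using Suc.IH by auto
    note Kfail_mult_bounds[OF this, of r]
    moreover have "\<And>s. 0 \<le> F_weight (Suc m) (Suc k) $ s"
      "\<And>s. F_weight (Suc m) (Suc k) $ s \<le> real (Suc (Suc k)) ^ m * fail_max ^ Suc k"
      using IH_m[of "Suc k"] by (auto simp del: F_weight.simps)
    note Ksucc_mult_bounds[OF this, of r]
    ultimately show ?case unfolding F_weight.simps vector_add_component by linarith
  qed
qed

lemma F_weight_nonneg: "0 \<le> F_weight m k $ r"
  by (cases m) (simp_all add: F_weight_bounds)

lemma summable_F_weight_Suc_power: "summable (\<lambda>k. real (Suc k) ^ j * F_weight m k $ r)"
proof (cases m)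
  case (Suc m')
  show ?thesis
  proof (rule summable_comparison_test')
    show "summable (\<lambda>k. real (Suc k) ^ (j + m') * fail_max ^ k)"
      using fail_max_pos fail_max_lt_one by (intro summable_power_times_geometric) auto
    show "norm (real (Suc k) ^ j * F_weight m k $ r) \<le> real (Suc k) ^ (j + m') * fail_max ^ k" for k
      using F_weight_bounds[of m' k r] Suc
      by (simp add: power_add mult.assoc mult_left_mono)
  qed
qed simp

lemma summable_F_weight_power: "summable (\<lambda>k. real k ^ j * F_weight m k $ r)"
  by (rule summable_comparison_test'[OF summable_F_weight_Suc_power[of j m r]])
    (simp add: F_weight_nonneg mult_right_mono power_mono)

definition F_moment :: "nat \<Rightarrow> nat \<Rightarrow> real^'n" where
  "F_moment j m = (\<chi> r. \<Sum>k. real k ^ j * F_weight m k $ r)"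

definition F_moment_shifted :: "nat \<Rightarrow> nat \<Rightarrow> real^'n" where
  "F_moment_shifted j m = (\<chi> r. \<Sum>k. real (Suc k) ^ j * F_weight m k $ r)"

lemma F_moment_sums: "(\<lambda>k. real k ^ j * F_weight m k $ r) sums F_moment j m $ r"
  unfolding F_moment_def using summable_sums[OF summable_F_weight_power] by simp

lemma F_moment_zero [simp]: "F_moment j 0 = 0"
  by (simp add: F_moment_def vec_eq_iff)

lemma F_moment_Suc:
  "F_moment j (Suc m) = (if j = 0 then F_weight (Suc m) 0 else 0) + Kfail *v F_moment_shifted j (Suc m)
     + Ksucc *v (F_moment j m - (if j = 0 then F_weight m 0 else 0))"
proof -
  define a where "a k = real (Suc k) ^ j *\<^sub>R F_weight (Suc m) k" for k
  define b where "b k = real (Suc k) ^ j *\<^sub>R F_weight m (Suc k)" for k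
  have sa: "summable (\<lambda>k. a k $ s)" for s
    unfolding a_def using summable_F_weight_Suc_power by simp
  have sb: "summable (\<lambda>k. b k $ s)" for s
    unfolding b_def using summable_F_weight_power[of j m s]
      summable_Suc_iff[of "\<lambda>k. real k ^ j * F_weight m k $ s"] by simp
  have b_sum: "(\<chi> s. \<Sum>k. b k $ s) = F_moment j m - (if j = 0 then F_weight m 0 else 0)"
    using suminf_split_head[OF summable_F_weight_power[of j m]]
    by (simp add: vec_eq_iff b_def F_moment_def)
  have a_sum: "(\<chi> s. \<Sum>k. a k $ s) = F_moment_shifted j (Suc m)"
    by (simp add: vec_eq_iff a_def F_moment_shifted_def)
  have step: "real (Suc k) ^ j * F_weight (Suc m) (Suc k) $ r = (Kfail *v a k)$r + (Ksucc *v b k)$r"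
    for k r by (simp add: a_def b_def matrix_vector_mult_scaleR algebra_simps)
  have "F_moment j (Suc m) $ r = ((if j = 0 then F_weight (Suc m) 0 else 0)
      + Kfail *v F_moment_shifted j (Suc m) + Ksucc *v (F_moment j m - (if j = 0 then F_weight m 0 else 0)))$r"
    for r
  proof -
    have "F_moment j (Suc m) $ r
        = (if j = 0 then F_weight (Suc m) 0 $ r else 0) + (\<Sum>k. (Kfail *v a k)$r + (Ksucc *v b k)$r)"
      using suminf_split_head[OF summable_F_weight_power[of j "Suc m" r]]
      by (simp add: F_moment_def step[symmetric] del: F_weight.simps)
    also have "\<dots> = (if j = 0 then F_weight (Suc m) 0 $ r else 0)
        + (Kfail *v (\<chi> s. \<Sum>k. a k $ s))$r + (Ksucc *v (\<chi> s. \<Sum>k. b k $ s))$r"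
      using suminf_add[OF suminf_matrix_vector_mult(1)[OF sa, of Kfail r]
          suminf_matrix_vector_mult(1)[OF sb, of Ksucc r]]
      by (simp add: suminf_matrix_vector_mult(2)[OF sa] suminf_matrix_vector_mult(2)[OF sb])
    finally show ?thesis unfolding a_sum b_sum by (cases "j = 0") (simp_all del: F_weight.simps)
  qed
  then show ?thesis unfolding vec_eq_iff by blast
qed

lemma F_moment_shifted_0: "F_moment_shifted 0 m = F_moment 0 m"
  by (simp add: F_moment_shifted_def F_moment_def)

lemma F_moment_shifted_1: "F_moment_shifted 1 m = F_moment 1 m + F_moment 0 m"
proof -
  have "(\<lambda>k. real k ^ 1 * F_weight m k $ r + real k ^ 0 * F_weight m k $ r)
      sums (F_moment 1 m $ r + F_moment 0 m $ r)" for r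
    by (intro sums_add F_moment_sums)
  then show ?thesis by (simp add: vec_eq_iff F_moment_shifted_def sums_iff algebra_simps)
qed

lemma F_moment_shifted_2: "F_moment_shifted 2 m = F_moment 2 m + 2 *\<^sub>R F_moment 1 m + F_moment 0 m"
proof -
  have "(\<lambda>k. real k ^ 2 * F_weight m k $ r + 2 * (real k ^ 1 * F_weight m k $ r)
      + real k ^ 0 * F_weight m k $ r) sums (F_moment 2 m $ r + 2 * F_moment 1 m $ r + F_moment 0 m $ r)"
    for r
    by (intro sums_add sums_mult F_moment_sums)
  moreover have "real k ^ 2 * w + 2 * (real k ^ 1 * w) + real k ^ 0 * w = real (Suc k) ^ 2 * w" for k w
    by (simp add: power2_eq_square algebra_simps)
  ultimately show ?thesis by (simp add: vec_eq_iff F_moment_shifted_def sums_iff)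
qed

lemma F_moment_0: "F_moment 0 (Suc m) = 1"
proof (induction m)
  case 0
  have "G *v F_moment 0 (Suc 0) = G *v 1"
    using F_moment_Suc[of 0 0]
    by (simp add: F_moment_shifted_0 G_mult Kfail_one algebra_simps)
  then show ?case by (rule G_cancel)
next
  case (Suc m)
  have "G *v F_moment 0 (Suc (Suc m)) = G *v 1"
    using F_moment_Suc[of 0 "Suc m"] F_moment_Suc[of 0 m]
    by (simp add: F_moment_shifted_0 Suc G_mult Kfail_one Ksucc_one algebra_simps)
  then show ?case by (rule G_cancel)
qed

lemma G_mult_eqI: "v = Kfail *v (v + u) + w \<Longrightarrow> G *v v = Kfail *v u + w"
proof -
  assume "v = Kfail *v (v + u) + w"
  then have "v - Kfail *v v = (Kfail *v (v + u) + w) - Kfail *v v"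
    by (rule arg_cong[where f = "\<lambda>x. x - Kfail *v v"])
  also have "\<dots> = Kfail *v u + w" by (simp add: matrix_vector_right_distrib)
  finally show ?thesis by (simp add: G_mult)
qed

lemma G_F_moment_1: "G *v F_moment 1 (Suc m) = Kfail *v 1 + Ksucc *v F_moment 1 m"
  using F_moment_Suc[of 1 m]
  by (intro G_mult_eqI) (simp add: F_moment_shifted_1[unfolded One_nat_def] F_moment_0)

lemma G_F_moment_2:
  "G *v F_moment 2 (Suc m) = Kfail *v (2 *\<^sub>R F_moment 1 (Suc m) + 1) + Ksucc *v F_moment 2 m"
  using F_moment_Suc[of 2 m]
  by (intro G_mult_eqI) (simp add: F_moment_shifted_2 F_moment_0 add.assoc)

lemma F_prob_moment_sums:
  "(\<lambda>k. real k ^ j * F_prob \<eta> K p (Suc m) k) sums ((\<chi> r. \<eta> r) \<bullet> F_moment j (Suc m))"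
proof -
  have "(\<lambda>k. \<Sum>r\<in>UNIV. \<eta> r * (real k ^ j * F_weight (Suc m) k $ r))
      sums (\<Sum>r\<in>UNIV. \<eta> r * F_moment j (Suc m) $ r)"
    by (intro sums_sum sums_mult F_moment_sums)
  then show ?thesis
    by (simp add: F_prob_eq_F_weight inner_vec_def sum_distrib_left mult.left_commute)
qed

lemma F_var_eq_moments:
  assumes "is_distribution \<eta>"
  shows "F_var \<eta> K p (Suc m)
    = (\<chi> r. \<eta> r) \<bullet> F_moment 2 (Suc m) - ((\<chi> r. \<eta> r) \<bullet> F_moment 1 (Suc m))^2"
proof -
  define w where "w = (\<chi> r. \<eta> r)"
  define F where "F k = F_prob \<eta> K p (Suc m) k" for k
  define M where "M = w \<bullet> F_moment 1 (Suc m)"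
  have "w \<bullet> F_moment 0 (Suc m) = 1"
    using assms by (simp add: F_moment_0 w_def is_distribution_def inner_vec_def)
  then have F_sums: "F sums 1" using F_prob_moment_sums[of 0 \<eta> m] unfolding F_def w_def by simp
  have "(\<lambda>k. real k * F k) sums M" using F_prob_moment_sums[of 1 \<eta> m] unfolding F_def M_def w_def by simp
  then have mean: "F_mean \<eta> K p (Suc m) = M"
    by (simp add: F_mean_def F_def[symmetric] sums_iff)
  have "(\<lambda>k. real k ^ 2 * F k - 2 * M * (real k * F k) + M^2 * F k)
      sums (w \<bullet> F_moment 2 (Suc m) - 2 * M * M + M^2 * 1)"
    using F_prob_moment_sums[of 2 \<eta> m] unfolding F_def[symmetric] w_def[symmetric]
    by (intro sums_add sums_diff sums_mult F_sums \<open>(\<lambda>k. real k * F k) sums M\<close>)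
  moreover have "real k ^ 2 * F k - 2 * M * (real k * F k) + M^2 * F k = (real k - M)^2 * F k" for k
    by (simp add: power2_eq_square algebra_simps)
  ultimately have "(\<lambda>k. (real k - M)^2 * F k) sums (w \<bullet> F_moment 2 (Suc m) - M^2)"
    by (simp add: power2_eq_square)
  then show ?thesis
    unfolding F_var_def mean F_def[symmetric] M_def w_def by (simp add: sums_iff)
qed

end

section \<open>The balanced case\<close>

locale ergodic_bernoulli_chain = bernoulli_chain K p for K :: "real^'n::finite^'n" and p +
  fixes \<mu> :: "real^'n"
  assumes unique_class: "unique_closed_irreducible K" and stationary_\<mu>: "stationary K \<mu>"
    and mean_success: "(\<Sum>i\<in>UNIV. \<mu>$i * p i) = 1/2"
begin

lemma \<mu>_K: "\<mu> v* K = \<mu>" using stationary_\<mu> unfolding stationary_def by auto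
lemma \<mu>_nonneg: "0 \<le> \<mu>$i" using stationary_\<mu> unfolding stationary_def by auto
lemma \<mu>_one: "\<mu> \<bullet> 1 = 1" using stationary_\<mu> unfolding stationary_def by (simp add: inner_vec_def)
lemma \<mu>_pvec: "\<mu> \<bullet> pvec = 1/2" using mean_success by (simp add: inner_vec_def pvec_def)
lemma \<mu>_K_mult: "\<mu> \<bullet> (K *v x) = \<mu> \<bullet> x" by (simp add: dot_lmul_matrix[symmetric] \<mu>_K)

definition target where "target = (SOME s. \<forall>r. (r, s) \<in> (step_rel K)\<^sup>+)"

lemma reaches_target: "(r, target) \<in> (step_rel K)\<^sup>+"
proof -
  have "\<exists>s. \<forall>r. (r, s) \<in> (step_rel K)\<^sup>+"
    using unique_closed_irreducible_common_target[OF stochastic unique_class] by blast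
  then have "\<forall>r. (r, target) \<in> (step_rel K)\<^sup>+" unfolding target_def by (rule someI_ex)
  then show ?thesis ..
qed

definition \<delta> where "\<delta> = Min (range (\<lambda>r. Q$r$target))"

lemma \<delta>_le: "\<delta> \<le> Q$r$target"
  unfolding \<delta>_def by (rule Min_le) auto

lemma \<delta>_pos: "0 < \<delta>"
proof -
  have "\<delta> \<in> range (\<lambda>r. Q$r$target)" unfolding \<delta>_def by (rule Min_in) auto
  then show ?thesis using Q_pos_if_reachable[OF reaches_target] by auto
qed

lemma \<delta>_le_one: "\<delta> \<le> 1"
  using \<delta>_le[of undefined] stochastic_matrix_le_one[OF Q_stochastic] by (rule order_trans)

definition \<pi> where "\<pi> = 2 *\<^sub>R (\<mu> v* Ksucc)"

lemma \<mu>_Ksucc: "\<mu> v* Ksucc = \<mu> v* G"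
proof -
  have "Ksucc = K - Kfail" using Kfail_plus_Ksucc by (simp add: algebra_simps)
  then show ?thesis
    by (simp add: G_def vector_matrix_mult_diff_distrib vector_matrix_mult_diff_rdistrib \<mu>_K)
qed

lemma \<pi>_inner_Ginv: "\<pi> \<bullet> (Ginv *v g) = 2 * (\<mu> \<bullet> g)"
proof -
  have "\<pi> v* Ginv = 2 *\<^sub>R \<mu>"
    by (simp only: \<pi>_def \<mu>_Ksucc scaleR_vector_matrix_assoc vector_matrix_mul_assoc G_Ginv_mat
        vector_matrix_mul_rid)
  then show ?thesis by (simp add: dot_lmul_matrix[symmetric])
qed

lemma \<pi>_inner: "\<pi> \<bullet> g = 2 * (\<mu> \<bullet> (Ksucc *v g))"
  by (simp add: \<pi>_def dot_lmul_matrix)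

lemma \<pi>_stationary: "\<pi> v* Q = \<pi>"
  by (simp only: \<pi>_def Q_def \<mu>_Ksucc scaleR_vector_matrix_assoc vector_matrix_mul_assoc
      matrix_mul_assoc G_Ginv_mat matrix_mul_lid)

lemma \<pi>_inner_Q_pow: "\<pi> \<bullet> Q_pow i g = \<pi> \<bullet> g"
  by (induction i) (simp_all add: dot_lmul_matrix[symmetric] \<pi>_stationary)

lemma \<pi>_distribution: "is_distribution (($) \<pi>)"
  unfolding is_distribution_def
proof
  show "\<forall>s. 0 \<le> \<pi>$s"
    by (simp add: \<pi>_def vector_matrix_mult_def Ksucc_nth \<mu>_nonneg K_nonneg p_pos less_imp_le sum_nonneg)
  have "\<pi> \<bullet> 1 = 1" by (simp add: \<pi>_inner Ksucc_one \<mu>_pvec)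
  then show "sum (($) \<pi>) UNIV = 1" by (simp add: inner_vec_def)
qed

lemma Q_pow_converges:
  assumes "is_distribution (($) w)" "\<And>r r'. \<bar>f$r - f$r'\<bar> \<le> D"
  shows "\<bar>w \<bullet> Q_pow i f - \<pi> \<bullet> f\<bar> \<le> (1 - \<delta>)^i * D"
  using doeblin_distributions[OF Q_stochastic \<delta>_le assms(2,1) \<pi>_distribution, of i]
  by (simp add: \<pi>_inner_Q_pow)

definition poisson_matrix where
  "poisson_matrix = mat 1 - K + 2 *\<^sub>R (outer pvec \<mu> ** diag_mat p ** K)"

lemma poisson_matrix_mult:
  "poisson_matrix *v x = x - K *v x + (2 * (\<mu> \<bullet> (Ksucc *v x))) *\<^sub>R pvec"
proof -
  have "outer pvec \<mu> ** diag_mat p ** K = outer pvec \<mu> ** Ksucc"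
    by (simp only: Ksucc_def matrix_mul_assoc)
  then show ?thesis
    by (simp add: poisson_matrix_def matrix_vector_mult_diff_rdistrib matrix_vector_mult_add_rdistrib
        scaleR_matrix_vector_assoc[symmetric] outer_mult_mult)
qed

lemma \<mu>_poisson_matrix_mult: "\<mu> \<bullet> (poisson_matrix *v x) = \<mu> \<bullet> (Ksucc *v x)"
  by (simp add: poisson_matrix_mult inner_diff_right inner_add_right \<mu>_K_mult \<mu>_pvec)

text \<open>The kernel is trivial: a null vector is harmonic, hence constant, and the rank-one
  correction then sees the constant through \<open>\<mu> \<bullet> pvec = 1/2 \<noteq> 0\<close>.\<close>
lemma poisson_matrix_invertible: "invertible poisson_matrix"
proof (rule invertible_if_ker_trivial)
  fix x assume x: "poisson_matrix *v x = 0"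
  have c: "\<mu> \<bullet> (Ksucc *v x) = 0" using \<mu>_poisson_matrix_mult[of x] x by simp
  then have "K *v x = x" using x by (simp add: poisson_matrix_mult)
  then have "x$r = x$target" for r
    by (rule stochastic_harmonic_const[OF stochastic trancl_into_rtrancl[OF reaches_target]])
  then have x_const: "x = x$target *\<^sub>R 1" by (simp add: vec_eq_iff)
  have "\<mu> \<bullet> (Ksucc *v (x$target *\<^sub>R 1)) = x$target / 2"
    by (simp add: matrix_vector_mult_scaleR Ksucc_one \<mu>_pvec)
  then have "x$target = 0" using c x_const by simp
  then show "x = 0" using x_const by simp
qed

definition poisson_sol where "poisson_sol = matrix_inv poisson_matrix *v (1 - pvec)"

lemma poisson_matrix_sol: "poisson_matrix *v poisson_sol = 1 - pvec"
  by (simp only: poisson_sol_def matrix_vector_mul_assoc matrix_inv_inverse[OF poisson_matrix_invertible]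
      matrix_vector_mul_lid)

lemma \<mu>_Ksucc_poisson_sol: "\<mu> \<bullet> (Ksucc *v poisson_sol) = 1/2"
  using \<mu>_poisson_matrix_mult[of poisson_sol]
  by (simp add: poisson_matrix_sol inner_diff_right \<mu>_one \<mu>_pvec)

lemma poisson_equation: "poisson_sol - K *v poisson_sol = 1 - 2 *\<^sub>R pvec"
  using poisson_matrix_sol by (simp add: poisson_matrix_mult \<mu>_Ksucc_poisson_sol algebra_simps scaleR_2)

lemma nu_tilde_eq: "nu_tilde K p \<mu> = 4 * (\<mu> \<bullet> (Kfail *v poisson_sol))"
proof -
  have "(\<chi> i. p i) = pvec" by (simp add: pvec_def)
  then show ?thesis
    by (simp add: nu_tilde_def poisson_matrix_def[symmetric] dot_lmul_matrix Kfail_def[symmetric]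
        poisson_sol_def matrix_vector_mul_assoc)
qed

lemma G_poisson_sol: "G *v poisson_sol = 1 - 2 *\<^sub>R pvec + Ksucc *v poisson_sol"
proof -
  have "K *v poisson_sol = poisson_sol - (1 - 2 *\<^sub>R pvec)" unfolding poisson_equation[symmetric] by simp
  moreover have "Kfail *v poisson_sol = K *v poisson_sol - Ksucc *v poisson_sol"
    by (simp add: K_mult_split)
  ultimately show ?thesis by (simp only: G_mult) (simp add: algebra_simps)
qed

definition mean_corr where "mean_corr m = poisson_sol - Q_pow m poisson_sol"

lemma F_moment_1_eq: "F_moment 1 m = real m *\<^sub>R 1 + mean_corr m"
proof (induction m)
  case (Suc m)
  have "G *v F_moment 1 (Suc m) = G *v (real (Suc m) *\<^sub>R 1 + mean_corr (Suc m))"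
    unfolding G_F_moment_1 Suc mean_corr_def
    by (simp add: algebra_simps G_poisson_sol G_Q_mult G_one Kfail_one Ksucc_one scaleR_2)
  then show ?case by (rule G_cancel)
qed (simp add: mean_corr_def)

text \<open>\<open>sq_dev m $ r = E\<^sub>r (F\<^sub>m - m)\<^sup>2\<close>.\<close>
definition sq_dev where "sq_dev m = F_moment 2 m - (2 * real m) *\<^sub>R F_moment 1 m + (real m)^2 *\<^sub>R 1"

lemma G_sq_dev_Suc: "G *v sq_dev (Suc m)
    = Ksucc *v sq_dev m + 1 + 2 *\<^sub>R (Kfail *v mean_corr (Suc m)) - 2 *\<^sub>R (Ksucc *v mean_corr m)"
proof -
  have M1: "G *v F_moment 1 (Suc m) = 1 - pvec + real m *\<^sub>R pvec + Ksucc *v mean_corr m"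
    unfolding G_F_moment_1
    by (simp add: F_moment_1_eq F_moment_1_eq[unfolded One_nat_def] Kfail_one Ksucc_one algebra_simps)
  have M2: "G *v F_moment 2 (Suc m) = (2 * real (Suc m)) *\<^sub>R (1 - pvec)
      + 2 *\<^sub>R (Kfail *v mean_corr (Suc m)) + (1 - pvec) + Ksucc *v F_moment 2 m"
    unfolding G_F_moment_2
    by (simp add: F_moment_1_eq F_moment_1_eq[unfolded One_nat_def] Kfail_one algebra_simps del: of_nat_Suc)
  have "G *v sq_dev (Suc m)
      = G *v F_moment 2 (Suc m) - (2 * real (Suc m)) *\<^sub>R (G *v F_moment 1 (Suc m)) + (real (Suc m))^2 *\<^sub>R pvec"
    by (simp add: sq_dev_def G_one algebra_simps)
  also have "\<dots> = Ksucc *v sq_dev m + 1 + 2 *\<^sub>R (Kfail *v mean_corr (Suc m)) - 2 *\<^sub>R (Ksucc *v mean_corr m)"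
    unfolding M1 M2
    by (simp add: sq_dev_def F_moment_1_eq F_moment_1_eq[unfolded One_nat_def] Ksucc_one algebra_simps
        power2_eq_square)
  finally show ?thesis .
qed

definition sq_dev_step where
  "sq_dev_step j = Ginv *v (1 + 2 *\<^sub>R (Kfail *v mean_corr j) - 2 *\<^sub>R (Ksucc *v mean_corr (j - 1)))"

lemma sq_dev_Suc: "sq_dev (Suc m) = Q *v sq_dev m + sq_dev_step (Suc m)"
proof (rule G_cancel)
  show "G *v sq_dev (Suc m) = G *v (Q *v sq_dev m + sq_dev_step (Suc m))"
    by (simp add: G_sq_dev_Suc matrix_vector_right_distrib G_Q_mult sq_dev_step_def G_Ginv algebra_simps)
qed

lemma sq_dev_eq_sum: "sq_dev m = (\<Sum>i<m. Q_pow i (sq_dev_step (m - i)))"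
proof (induction m)
  case 0
  then show ?case by (simp add: sq_dev_def)
next
  case (Suc m)
  have "Q *v (\<Sum>i<m. Q_pow i (sq_dev_step (m - i))) = (\<Sum>i<m. Q_pow (Suc i) (sq_dev_step (Suc m - Suc i)))"
    by (simp add: linear_sum[OF matrix_vector_mul_linear])
  then show ?case
    by (simp add: sq_dev_Suc Suc sum.lessThan_Suc_shift del: sum.lessThan_Suc)
qed

lemma \<pi>_one: "\<pi> \<bullet> 1 = 1"
  using \<pi>_distribution by (rule distribution_inner_one)

lemma Ginv_Kfail_mult: "Ginv *v (Kfail *v v) = Ginv *v v - v"
  using Ginv_G[of v] by (simp add: G_mult matrix_vector_mult_diff_distrib algebra_simps)

lemma Ginv_Ksucc_mult: "Ginv *v (Ksucc *v v) = Q *v v"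
  by (simp only: Q_def matrix_vector_mul_assoc)

definition poisson_mean where "poisson_mean = \<pi> \<bullet> poisson_sol"

definition poisson_dev where "poisson_dev j = Q_pow j poisson_sol - poisson_mean *\<^sub>R 1"

definition limit_step where
  "limit_step = Ginv *v (1 + 2 *\<^sub>R (Kfail *v poisson_sol) - 2 *\<^sub>R (Ksucc *v poisson_sol))
     + (4 * poisson_mean) *\<^sub>R 1 - (2 * poisson_mean) *\<^sub>R (Ginv *v 1)"

lemma sq_dev_step_eq:
  assumes "0 < j"
  shows "sq_dev_step j = limit_step + 4 *\<^sub>R poisson_dev j - 2 *\<^sub>R (Ginv *v poisson_dev j)"
proof -
  obtain i where j: "j = Suc i" using assms by (cases j) auto
  show ?thesis
    unfolding sq_dev_step_def limit_step_def poisson_dev_def mean_corr_def j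
    by (simp add: matrix_vector_right_distrib matrix_vector_mult_diff_distrib matrix_vector_mult_scaleR
        Ginv_Kfail_mult Ginv_Ksucc_mult algebra_simps)
qed

lemma \<pi>_limit_step: "\<pi> \<bullet> limit_step = nu_tilde K p \<mu>"
  by (simp add: limit_step_def \<pi>_inner_Ginv \<pi>_one \<mu>_one nu_tilde_eq \<mu>_Ksucc_poisson_sol inner_add_right
      inner_diff_right)

lemma poisson_dev_bound: "\<bar>poisson_dev j $ s\<bar> \<le> (1 - \<delta>)^j * (2 * norm poisson_sol)"
  using Q_pow_converges[OF distribution_axis abs_diff_component_le_norm, of s j poisson_sol]
  by (simp add: poisson_dev_def poisson_mean_def inner_axis')

lemma sq_dev_step_estimate:
  assumes w: "is_distribution (($) w)" and "0 < j"
  shows "\<bar>w \<bullet> Q_pow i (sq_dev_step j) - nu_tilde K p \<mu>\<bar>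
    \<le> (1 - \<delta>)^i * (2 * norm limit_step)
      + (1 - \<delta>)^j * ((4 + 2 * (\<Sum>a\<in>UNIV. \<Sum>b\<in>UNIV. \<bar>Ginv$a$b\<bar>)) * (2 * norm poisson_sol))"
proof -
  define b where "b = (1 - \<delta>)^j * (2 * norm poisson_sol)"
  define N where "N = (\<Sum>a\<in>UNIV. \<Sum>b\<in>UNIV. \<bar>Ginv$a$b\<bar>)"
  define err where "err = 4 *\<^sub>R poisson_dev j - 2 *\<^sub>R (Ginv *v poisson_dev j)"
  have "\<bar>err$s\<bar> \<le> (4 + 2 * N) * b" for s
  proof -
    have "\<bar>poisson_dev j $ s\<bar> \<le> b" "\<bar>(Ginv *v poisson_dev j) $ s\<bar> \<le> N * b"
      unfolding b_def N_def using poisson_dev_bound by (auto intro: abs_matrix_vector_mult_le)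
    then show ?thesis unfolding err_def by (simp add: algebra_simps abs_le_iff)
  qed
  then have "\<bar>w \<bullet> Q_pow i err\<bar> \<le> (4 + 2 * N) * b"
    by (intro distribution_inner_abs_le[OF w] Q_pow_abs_le)
  moreover have "\<bar>w \<bullet> Q_pow i limit_step - nu_tilde K p \<mu>\<bar> \<le> (1 - \<delta>)^i * (2 * norm limit_step)"
    using Q_pow_converges[OF w abs_diff_component_le_norm, of i limit_step] unfolding \<pi>_limit_step .
  moreover have "w \<bullet> Q_pow i (sq_dev_step j) = w \<bullet> Q_pow i limit_step + w \<bullet> Q_pow i err"
    by (simp add: sq_dev_step_eq[OF \<open>0 < j\<close>] err_def add_diff_eq[symmetric]
        linear_add[OF linear_Q_pow] inner_add_right)
  ultimately show ?thesis unfolding b_def N_def by (simp add: abs_le_iff algebra_simps)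
qed

text \<open>Summing the estimate over the renewal decomposition of \<open>sq_dev\<close> gives two geometric series,
  in \<open>i\<close> and in \<open>m - i\<close>.\<close>
lemma sq_dev_estimate:
  "\<exists>C. \<forall>w m. is_distribution (($) w) \<longrightarrow> \<bar>w \<bullet> sq_dev m - real m * nu_tilde K p \<mu>\<bar> \<le> C"
proof -
  define l where "l = 1 - \<delta>"
  have l: "0 \<le> l" "l < 1" using \<delta>_pos \<delta>_le_one unfolding l_def by auto
  define A where "A = 2 * norm limit_step"
  define B where "B = (4 + 2 * (\<Sum>a\<in>UNIV. \<Sum>b\<in>UNIV. \<bar>Ginv$a$b\<bar>)) * (2 * norm poisson_sol)"
  have AB: "0 \<le> A" "0 \<le> B" unfolding A_def B_def by (auto intro!: mult_nonneg_nonneg add_nonneg_nonneg sum_nonneg)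
  have "\<bar>w \<bullet> sq_dev m - real m * nu_tilde K p \<mu>\<bar> \<le> 1 / (1 - l) * A + 1 / (1 - l) * B"
    if w: "is_distribution (($) w)" for w m
  proof -
    have "\<bar>w \<bullet> sq_dev m - real m * nu_tilde K p \<mu>\<bar>
        = \<bar>\<Sum>i<m. w \<bullet> Q_pow i (sq_dev_step (m - i)) - nu_tilde K p \<mu>\<bar>"
      by (simp add: sq_dev_eq_sum inner_sum_right sum_subtractf)
    also have "\<dots> \<le> (\<Sum>i<m. l^i * A + l^(m - i) * B)"
      using sq_dev_step_estimate[OF w] unfolding l_def A_def B_def
      by (intro order_trans[OF sum_abs] sum_mono) auto
    also have "\<dots> \<le> (\<Sum>i<m. l^i) * A + (\<Sum>i<m. l^i) * B"
    proof -
      have "(\<Sum>i<m. l^(m - i)) \<le> (\<Sum>i<m. l^(m - Suc i))"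
        using l by (intro sum_mono power_decreasing) auto
      also have "\<dots> = (\<Sum>i<m. l^i)" by (rule sum.nat_diff_reindex)
      finally show ?thesis
        using AB by (simp add: sum.distrib sum_distrib_right[symmetric] mult_right_mono)
    qed
    also have "\<dots> \<le> 1 / (1 - l) * A + 1 / (1 - l) * B"
      using sum_power_le_inverse[OF l] AB by (intro add_mono mult_right_mono) auto
    finally show ?thesis .
  qed
  then show ?thesis by blast
qed

lemma F_var_eq_sq_dev:
  assumes "is_distribution \<eta>"
  shows "F_var \<eta> K p (Suc m) = (\<chi> r. \<eta> r) \<bullet> sq_dev (Suc m) - ((\<chi> r. \<eta> r) \<bullet> mean_corr (Suc m))^2"
proof -
  have one: "(\<chi> r. \<eta> r) \<bullet> 1 = 1" and two: "(\<chi> r. \<eta> r) \<bullet> 2 = 2"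
    using assms by (simp_all add: is_distribution_def inner_vec_def sum_distrib_right[symmetric])
  show ?thesis
    unfolding F_var_eq_moments[OF assms] sq_dev_def
    by (simp add: F_moment_1_eq F_moment_1_eq[unfolded One_nat_def] inner_add_right inner_diff_right
        one two power2_eq_square algebra_simps)
qed

lemma mean_corr_bound:
  assumes "is_distribution (($) w)" shows "\<bar>w \<bullet> mean_corr m\<bar> \<le> 2 * norm poisson_sol"
proof (rule distribution_inner_abs_le[OF assms])
  fix s
  have "\<bar>Q_pow m poisson_sol $ s\<bar> \<le> norm poisson_sol"
    by (rule Q_pow_abs_le) (rule component_le_norm_cart)
  then show "\<bar>mean_corr m $ s\<bar> \<le> 2 * norm poisson_sol"
    using component_le_norm_cart[of poisson_sol s] by (simp add: mean_corr_def)
qed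

lemma F_var_deviation_bounded:
  "\<exists>C. \<forall>\<eta> n. is_distribution \<eta> \<longrightarrow> \<bar>F_var \<eta> K p (Suc n) - real n * nu_tilde K p \<mu>\<bar> \<le> C"
proof -
  define \<nu> where "\<nu> = nu_tilde K p \<mu>"
  obtain C where C: "\<And>w m. is_distribution (($) w) \<Longrightarrow> \<bar>w \<bullet> sq_dev m - real m * \<nu>\<bar> \<le> C"
    using sq_dev_estimate unfolding \<nu>_def by blast
  have "\<bar>F_var \<eta> K p (Suc n) - real n * \<nu>\<bar> \<le> C + (2 * norm poisson_sol)^2 + \<bar>\<nu>\<bar>"
    if \<eta>: "is_distribution \<eta>" for \<eta> n
  proof -
    define w where "w = (\<chi> r. \<eta> r)"
    have w: "is_distribution (($) w)" using \<eta> unfolding is_distribution_def w_def by simp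
    have "(w \<bullet> mean_corr (Suc n))^2 \<le> (2 * norm poisson_sol)^2"
      using power_mono[OF mean_corr_bound[OF w, of "Suc n"] abs_ge_zero, of 2] by simp
    then show ?thesis
      using F_var_eq_sq_dev[OF \<eta>, of n] C[OF w, of "Suc n"] abs_ge_self[of \<nu>] abs_ge_minus_self[of \<nu>]
      unfolding w_def[symmetric]
      by (simp add: algebra_simps abs_le_iff) (use zero_le_power2[of "w \<bullet> mean_corr (Suc n)"] in linarith)
  qed
  then show ?thesis unfolding \<nu>_def by blast
qed

end

theorem proposition4p2:
  fixes K :: "real^'n^'n" and p :: "'n \<Rightarrow> real" and \<mu> :: "real^'n"
  assumes "stochastic_matrix K"
    and "unique_closed_irreducible K"
    and "stationary K \<mu>"
    and "\<forall>i. 0 < p i \<and> p i < 1"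
    and "(\<Sum>i\<in>UNIV. \<mu>$i * p i) = 1/2"
  shows "\<exists>C>0. \<forall>\<eta>. is_distribution \<eta> \<longrightarrow> (\<forall>n::nat. n \<ge> 1 \<longrightarrow>
           \<bar>F_var \<eta> K p (n+1) / real n - nu_tilde K p \<mu>\<bar> \<le> C / real n)"
proof -
  interpret ergodic_bernoulli_chain K p \<mu> using assms by unfold_locales
  obtain C where
    C: "\<And>\<eta> n. is_distribution \<eta> \<Longrightarrow> \<bar>F_var \<eta> K p (Suc n) - real n * nu_tilde K p \<mu>\<bar> \<le> C"
    using F_var_deviation_bounded by blast
  have "\<bar>F_var \<eta> K p (n+1) / real n - nu_tilde K p \<mu>\<bar> \<le> (\<bar>C\<bar> + 1) / real n"
    if "is_distribution \<eta>" and "n \<ge> 1" for \<eta> n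
  proof -
    have "\<bar>F_var \<eta> K p (n+1) - real n * nu_tilde K p \<mu>\<bar> \<le> \<bar>C\<bar> + 1"
      using C[OF \<open>is_distribution \<eta>\<close>, of n] by simp
    then show ?thesis using \<open>n \<ge> 1\<close> by (simp add: field_simps abs_divide[symmetric] divide_right_mono)
  qed
  moreover have "0 < \<bar>C\<bar> + 1" by simp
  ultimately show ?thesis by blast
qed

end
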